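(* Let $d\ge2$ and $-\frac{1}{d^2-1} \le t \le \frac{1}{d+1}$. Suppose $\{|x_i\rangle\}_{i=1}^{d^2}$ and $\{|y_i\rangle\}_{i=1}^{d^2}$ are tight, informationally complete frames of unit vectors in $\mathbb{C}^d$ such that for all $i\neq j$ $$|\langle x_i|y_j\rangle|^2 = \frac{1-t}{d}, \qquad |\langle x_i|y_i\rangle|^2 = \frac{t(d^2-1)+1}{d}.$$ Then $$\frac{1}{d^2}\sum_{i=1}^{d^2} |x_i\rangle\langle x_i| \otimes |y_i\rangle\langle y_i| = \frac{t}{d}U_{SW} + \frac{1-t}{d^2}I_{d^2}.$$
   Context: $U_{SW}$ is the swap operator on $\mathbb{C}^d\otimes\mathbb{C}^d$, $U_{SW}(|u\rangle\otimes|v\rangle)=|v\rangle\otimes|u\rangle$. A set of unit vectors $\{|x_i\rangle\}_{i=1}^n\subset\mathbb{C}^d$ is a tight frame if $\sum_i |x_i\rangle\langle x_i| = cI_d$ for some real $c\ge0$; it is informationally complete if the projectors $|x_i\rangle\langle x_i|$ span the space of all complex $d\times d$ matrices. *)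

theory Defs
  imports "HOL-Analysis.Analysis"
begin

text \<open>Vectors of C^d are modelled as complex^'n with d = CARD('n);
  d x d matrices as complex^'n^'n; operators on C^d (x) C^d as matrices
  indexed by the finite type 'n \<times> 'n.\<close>

definition cinner :: "complex^'n::finite \<Rightarrow> complex^'n \<Rightarrow> complex" where
  "cinner x y = (\<Sum>k\<in>UNIV. cnj (x $ k) * y $ k)"

definition proj :: "complex^'n::finite \<Rightarrow> complex^'n^'n" where
  "proj x = (\<chi> a b. x $ a * cnj (x $ b))"

definition tight_frame :: "nat \<Rightarrow> (nat \<Rightarrow> complex^'n::finite) \<Rightarrow> bool" where
  "tight_frame n x \<longleftrightarrow> (\<exists>c::real. c \<ge> 0 \<and> (\<Sum>i<n. proj (x i)) = mat (complex_of_real c))"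

definition info_complete :: "nat \<Rightarrow> (nat \<Rightarrow> complex^'n::finite) \<Rightarrow> bool" where
  "info_complete n x \<longleftrightarrow>
     (\<forall>M::complex^'n^'n. \<exists>c::nat \<Rightarrow> complex. M = (\<chi> a b. \<Sum>i<n. c i * proj (x i) $ a $ b))"

definition kron :: "complex^'n::finite^'n \<Rightarrow> complex^'n^'n \<Rightarrow> complex^('n\<times>'n)^('n\<times>'n)" where
  "kron P Q = (\<chi> u v. P $ fst u $ fst v * Q $ snd u $ snd v)"

text \<open>swap operator: U(|a>|b>) = |b>|a>, matrix entry ((a,b),(c,d)) = [a=d \<and> b=c]\<close>
definition swap_op :: "complex^('n::finite\<times>'n)^('n\<times>'n)" where
  "swap_op = (\<chi> u v. if u = prod.swap v then 1 else 0)"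

end

theory Submission
  imports Defs
begin

(* Both sides are operators on C^d \<otimes> C^d, and these are separated by the functionals
  X \<mapsto> tr((A \<otimes> B) X); by informational completeness of the two frames it even suffices to take
  A = |y_j><y_j| and B = |x_k><x_k|. For these the left-hand side gives
  d^-2 \<Sum>_i |<x_i|y_j>|^2 |<x_k|y_i>|^2, a sum over products of the two prescribed overlap values,
  while tr((A \<otimes> B) U_SW) = |<x_k|y_j>|^2 and tr(A \<otimes> B) = 1; a short computation shows that the
  results agree. *)

lemma sum_UNIV_prod:
  "(\<Sum>u\<in>(UNIV::('a::finite \<times> 'b::finite) set). f u) = (\<Sum>a\<in>UNIV. \<Sum>b\<in>UNIV. f (a, b))"
  by (simp add: sum.cartesian_product flip: UNIV_Times_UNIV)

lemma sum_sum_delta: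
  "(\<Sum>a\<in>(UNIV::'a::finite set). \<Sum>b\<in>(UNIV::'b::finite set). if a = i \<and> b = j then f a b else 0)
     = f i j"
proof -
  have "(\<Sum>b\<in>(UNIV::'b set). if a = i \<and> b = j then f a b else 0) = (if a = i then f a j else 0)"
    for a
    by (cases "a = i") simp_all
  then show ?thesis by simp
qed

lemma trace_matrix_mult:
  "trace (A ** B) = (\<Sum>i\<in>UNIV. \<Sum>j\<in>UNIV. A $ i $ j * B $ j $ i)"
  by (simp add: trace_def matrix_matrix_mult_def)

lemma trace_mult_add_right:
  fixes A :: "'a::comm_semiring_1^'n^'n"
  shows "trace (A ** (B + C)) = trace (A ** B) + trace (A ** C)"
  by (simp add: matrix_add_ldistrib trace_add)

lemma trace_mult_scaleR_right:
  fixes A :: "'a::{real_algebra_1, comm_semiring_1}^'n^'n"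
  shows "trace (A ** (r *\<^sub>R B)) = r *\<^sub>R trace (A ** B)"
  by (simp add: trace_matrix_mult scaleR_sum_right)

lemma trace_mult_sum_right:
  "trace (A ** (\<Sum>i\<in>S. B i)) = (\<Sum>i\<in>S. trace (A ** B i))"
  by (simp add: trace_matrix_mult sum_distrib_left sum_component sum.swap[of _ _ S])

lemma trace_lincomb_mult:
  "trace ((\<chi> a b. \<Sum>i\<in>S. c i * A i $ a $ b) ** X) = (\<Sum>i\<in>S. c i * trace (A i ** X))"
  by (simp add: trace_matrix_mult sum_distrib_left sum_distrib_right mult_ac sum.swap[of _ _ S])

definition matrix_unit :: "'m \<Rightarrow> 'n \<Rightarrow> 'a::zero_neq_one^'n^'m" where
  "matrix_unit i j = (\<chi> p q. if p = i \<and> q = j then 1 else 0)"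

lemma trace_matrix_unit_mult: "trace (matrix_unit i j ** A) = A $ j $ i"
  by (simp add: trace_matrix_mult matrix_unit_def if_distrib[where f="\<lambda>z. z * _"] sum_sum_delta
      cong: if_cong)

lemma kron_matrix_unit: "kron (matrix_unit a b) (matrix_unit c e) = matrix_unit (a, c) (b, e)"
  by (simp add: kron_def matrix_unit_def vec_eq_iff prod_eq_iff)

lemma kron_mult: "kron A B ** kron P Q = kron (A ** P) (B ** Q)"
  by (simp add: kron_def matrix_matrix_mult_def vec_eq_iff sum_UNIV_prod sum_product mult_ac)

lemma trace_kron: "trace (kron A B) = trace A * trace B"
  by (simp add: kron_def trace_def sum_UNIV_prod sum_product)

lemma trace_kron_mult_swap_op: "trace (kron A B ** swap_op) = trace (A ** B)"
  by (simp add: trace_matrix_mult kron_def swap_op_def sum_UNIV_prod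
      if_distrib[where f="\<lambda>z. _ * z"] sum_sum_delta cong: if_cong)

lemma kron_lincomb_left:
  "kron (\<chi> a b. \<Sum>i\<in>S. c i * A i $ a $ b) B = (\<chi> u v. \<Sum>i\<in>S. c i * kron (A i) B $ u $ v)"
  by (simp add: kron_def sum_distrib_left sum_distrib_right mult_ac)

lemma kron_lincomb_right:
  "kron A (\<chi> a b. \<Sum>i\<in>S. c i * B i $ a $ b) = (\<chi> u v. \<Sum>i\<in>S. c i * kron A (B i) $ u $ v)"
  by (simp add: kron_def sum_distrib_left mult_ac)

lemma eq_if_trace_kron_mult_eq:
  assumes "\<And>A B. trace (kron A B ** X) = trace (kron A B ** Y)"
  shows "X = Y"
proof -
  have "X $ u $ v = Y $ u $ v" for u v
    using assms[of "matrix_unit (fst v) (fst u)" "matrix_unit (snd v) (snd u)"]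
    by (simp add: kron_matrix_unit trace_matrix_unit_mult)
  then show ?thesis by (simp add: vec_eq_iff)
qed

lemma eq_if_trace_kron_proj_mult_eq:
  assumes "info_complete n x" and "info_complete n y"
    and "\<And>j k. j < n \<Longrightarrow> k < n \<Longrightarrow>
      trace (kron (proj (x j)) (proj (y k)) ** X) = trace (kron (proj (x j)) (proj (y k)) ** Y)"
  shows "X = Y"
proof (rule eq_if_trace_kron_mult_eq)
  fix A B
  obtain c where A: "A = (\<chi> a b. \<Sum>i<n. c i * proj (x i) $ a $ b)"
    using assms(1) unfolding info_complete_def by blast
  obtain e where B: "B = (\<chi> a b. \<Sum>i<n. e i * proj (y i) $ a $ b)"
    using assms(2) unfolding info_complete_def by blast
  have "trace (kron A B ** Z)
      = (\<Sum>k<n. e k * (\<Sum>j<n. c j * trace (kron (proj (x j)) (proj (y k)) ** Z)))" for Z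
    unfolding A B kron_lincomb_left trace_lincomb_mult kron_lincomb_right ..
  then show "trace (kron A B ** X) = trace (kron A B ** Y)"
    using assms(3) by simp
qed

lemma trace_proj: "trace (proj x) = of_real ((norm x)\<^sup>2)"
proof -
  have "of_real ((norm x)\<^sup>2) = (\<Sum>k\<in>UNIV. complex_of_real ((cmod (x $ k))\<^sup>2))"
    by (simp add: norm_vec_def L2_set_def sum_nonneg)
  also have "\<dots> = (\<Sum>k\<in>UNIV. x $ k * cnj (x $ k))"
    by (simp only: complex_norm_square)
  finally show ?thesis
    by (simp add: trace_def proj_def)
qed

lemma trace_proj_mult_proj: "trace (proj x ** proj y) = of_real ((cmod (cinner x y))\<^sup>2)"
proof -
  have "trace (proj x ** proj y) = (\<Sum>a\<in>UNIV. \<Sum>b\<in>UNIV. (cnj (x $ b) * y $ b) * (cnj (y $ a) * x $ a))"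
    by (simp add: trace_matrix_mult proj_def mult_ac)
  also have "\<dots> = cinner x y * cnj (cinner x y)"
    by (simp add: cinner_def sum_product mult_ac)
  finally show ?thesis
    by (simp only: complex_norm_square)
qed

lemma sum_two_valued_products:
  fixes a b :: real
  assumes "j < N" and "k < N"
  shows "(\<Sum>i<N. (if i = j then a else b) * (if k = i then a else b))
     = real N * b\<^sup>2 + 2 * b * (a - b) + (if j = k then (a - b)\<^sup>2 else 0)"
proof -
  have "(\<Sum>i<N. (if i = j then a else b) * (if k = i then a else b))
    = (\<Sum>i<N. b\<^sup>2 + (if i = j then b * (a - b) else 0) + (if i = k then b * (a - b) else 0)
          + (if i = j then (if i = k then (a - b)\<^sup>2 else 0) else 0))"
    by (rule sum.cong) (auto simp: power2_eq_square algebra_simps)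
  also have "\<dots> = real N * b\<^sup>2 + 2 * b * (a - b) + (if j = k then (a - b)\<^sup>2 else 0)"
    using assms by (simp add: sum.distrib)
  finally show ?thesis .
qed

lemma sum_overlap_products:
  fixes t :: real
  assumes "d > 0" and "j < d\<^sup>2" and "k < d\<^sup>2"
  defines "a \<equiv> (t * (real d ^ 2 - 1) + 1) / real d" and "b \<equiv> (1 - t) / real d"
  shows "1 / real d ^ 2 * (\<Sum>i<d\<^sup>2. (if i = j then a else b) * (if k = i then a else b))
     = t / real d * (if k = j then a else b) + (1 - t) / real d ^ 2"
proof -
  have "real (d\<^sup>2) * b\<^sup>2 = (1 - t)\<^sup>2" and "2 * b * (a - b) = 2 * t * (1 - t)"
    and "(a - b)\<^sup>2 = real d ^ 2 * t\<^sup>2"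
    and "real d * t * a = real d ^ 2 * t\<^sup>2 - t\<^sup>2 + t" and "real d * t * b = t - t\<^sup>2"
    using assms(1) by (simp_all add: a_def b_def field_simps power2_eq_square)
  then have sum_eq: "(\<Sum>i<d\<^sup>2. (if i = j then a else b) * (if k = i then a else b))
      = real d * t * (if k = j then a else b) + (1 - t)"
    using sum_two_valued_products[OF assms(2,3), of a b]
    by (cases "j = k") (simp_all add: power2_eq_square algebra_simps)
  have "1 / real d ^ 2 * (real d * t * c + (1 - t)) = t / real d * c + (1 - t) / real d ^ 2" for c
    using assms(1) by (simp add: field_simps power2_eq_square)
  then show ?thesis
    unfolding sum_eq .
qed

theorem theorem2:
  fixes x y :: "nat \<Rightarrow> complex^'n" and t
  defines "d \<equiv> CARD('n)"
  assumes "d \<ge> 2"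
    and "- 1 / (real d ^ 2 - 1) \<le> t" and "t \<le> 1 / (real d + 1)"
    and "\<forall>i<d^2. norm (x i) = 1" and "\<forall>i<d^2. norm (y i) = 1"
    and "tight_frame (d^2) x" and "tight_frame (d^2) y"
    and "info_complete (d^2) x" and "info_complete (d^2) y"
    and "\<forall>i<d^2. \<forall>j<d^2. i \<noteq> j \<longrightarrow> (cmod (cinner (x i) (y j)))^2 = (1 - t) / real d"
    and "\<forall>i<d^2. (cmod (cinner (x i) (y i)))^2 = (t * (real d ^ 2 - 1) + 1) / real d"
  shows "(1 / real d ^ 2) *\<^sub>R (\<Sum>i<d^2. kron (proj (x i)) (proj (y i)))
           = (t / real d) *\<^sub>R swap_op + ((1 - t) / real d ^ 2) *\<^sub>R mat 1"
proof (rule eq_if_trace_kron_proj_mult_eq[OF \<open>info_complete (d^2) y\<close> \<open>info_complete (d^2) x\<close>])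
  define a where "a = (t * (real d ^ 2 - 1) + 1) / real d"
  define b where "b = (1 - t) / real d"
  have d_pos: "d > 0"
    using assms(2) by simp
  have overlap: "trace (proj (x i) ** proj (y j)) = of_real (if i = j then a else b)"
    if "i < d^2" and "j < d^2" for i j
  proof -
    have "(cmod (cinner (x i) (y j)))\<^sup>2 = (if i = j then a else b)"
      using that assms(11,12) by (auto simp: a_def b_def)
    then show ?thesis by (simp add: trace_proj_mult_proj)
  qed
  have unit_x: "trace (proj (x i)) = 1" and unit_y: "trace (proj (y i)) = 1" if "i < d^2" for i
    using that assms(5,6) by (simp_all add: trace_proj)
  fix j k assume j: "j < d^2" and k: "k < d^2"
  let ?K = "kron (proj (y j)) (proj (x k))"
  let ?lhs = "(1 / real d ^ 2) *\<^sub>R (\<Sum>i<d^2. kron (proj (x i)) (proj (y i)))"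
  let ?rhs = "(t / real d) *\<^sub>R swap_op + ((1 - t) / real d ^ 2) *\<^sub>R mat 1"
  have "trace (?K ** ?lhs) = (1 / real d ^ 2) *\<^sub>R
          (\<Sum>i<d^2. trace (proj (x i) ** proj (y j)) * trace (proj (x k) ** proj (y i)))"
    by (simp only: trace_mult_scaleR_right trace_mult_sum_right kron_mult trace_kron
        trace_mul_sym[of "proj (y j)"])
  also have "\<dots> = (1 / real d ^ 2) *\<^sub>R
      of_real (\<Sum>i<d^2. (if i = j then a else b) * (if k = i then a else b))"
    using j k by (simp add: overlap)
  also have "\<dots> = of_real (t / real d * (if k = j then a else b) + (1 - t) / real d ^ 2)"
    by (simp only: scaleR_conv_of_real of_real_mult[symmetric] d_pos j k
        sum_overlap_products[of d j k t, folded a_def b_def])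
  also have "\<dots> = (t / real d) *\<^sub>R of_real (if k = j then a else b) + ((1 - t) / real d ^ 2) *\<^sub>R 1"
    by (simp add: scaleR_conv_of_real)
  also have "\<dots> = trace (?K ** ?rhs)"
    by (simp only: trace_mult_add_right trace_mult_scaleR_right trace_kron_mult_swap_op trace_kron
        matrix_mul_rid trace_mul_sym[of "proj (y j)"] overlap unit_x unit_y j k mult_1)
  finally show "trace (?K ** ?lhs) = trace (?K ** ?rhs)" .
qed

end
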